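(* Let $\mathcal V\subset\mathbb Q$ satisfy Hypothesis (H) and let $\mathcal R\subset\mathbb Q$ satisfy property $\star_{\mathcal V}$. Then the $\mathbf K$-linear map $\mathscr H\to\mathscr H_{|\mathcal R}$, $f=\sum_\gamma f_\gamma z^\gamma\mapsto f_{|\mathcal R}=\sum_{\gamma\in\mathcal R}f_\gamma z^\gamma$, restricts to a $\mathbf K$-linear isomorphism from $\operatorname{Sol}(L,\mathscr H)=\{f\in\mathscr H: L(f)=0\}$ onto $\mathcal C_{\mathcal R}=\{f\in\mathscr H_{|\mathcal R}:\operatorname{supp} L(f)\cap\psi(\mathcal R)=\emptyset\}=\{f\in\mathscr H_{|\mathcal R}:\pi(\operatorname{supp} L(f))\cap\mathcal R=\emptyset\}$.
   Context: Let $\mathbf K$ be a field and $\ell\geq 2$ an integer. Let $\mathscr H$ be the field of Hahn series $f=\sum_{\gamma\in\mathbb Q}f_\gamma z^\gamma$ with coefficients in $\mathbf K$ and well-ordered support $\operatorname{supp} f=\{\gamma: f_\gamma\neq 0\}$; for $Q\subset\mathbb Q$, $\mathscr H_{|Q}=\{f\in\mathscr H:\operatorname{supp} f\subset Q\}$. Let $\phi_\ell$ be the automorphism $f(z)\mapsto f(z^\ell)$. Let $L=a_n\phi_\ell^n+\dots+a_0$ with $n\geq1$, $a_i\in\mathbf K[z]$, $a_0a_n\neq0$, acting by $L(f)=\sum_i a_i f(z^{\ell^i})$. Let $\mathcal P(L)=\{(\ell^i,j): 0\le i\le n,\ j\in\operatorname{supp} a_i\}$. The Newton polygon of $L$ is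 the convex hull of $\{(\ell^i,j): 0\le i\le n,\ j\geq\operatorname{val} a_i\}\subset\mathbb R^2$; the slopes of its non-vertical edges form $\mathcal S(L)$. Define $\Psi(v)=\{v\ell^i+j:(\ell^i,j)\in\mathcal P(L)\}$, $\psi(v)=\min\Psi(v)$, $\pi(q)=\max\{(q-j)/\ell^i:(\ell^i,j)\in\mathcal P(L)\}$; images of sets are taken elementwise. Hypothesis (H) on $\mathcal V\subset\mathbb Q$: (1) every $f\in\mathscr H$ with $L(f)=0$ satisfies $\operatorname{supp} f\subset\mathcal V$; (2) $\mathcal V$ is well-ordered; (3) $-\mathcal S(L)\subset\mathcal V$; (4) $\bigcup_{v\in\mathcal V}\pi(\Psi(v))=\mathcal V$. A set $\mathcal R\subset\mathbb Q$ satisfies $\star_{\mathcal V}$ if (a) $-\mathcal S(L)\subset\mathcal R\subset\mathcal V$ and (b) $\bigcup_{v\in\mathcal V\setminus\mathcal R}\pi(\Psi(v))=\mathcal V\setminus\mathcal R$. *)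

theory Defs
  imports "HOL-Analysis.Analysis" "HOL-Computational_Algebra.Polynomial"
begin

text \<open>Hahn series with rational exponents and coefficients in a field 'k are
represented by their coefficient functions rat => 'k with well-ordered support.\<close>

definition well_ordered_rat :: "rat set \<Rightarrow> bool" where
  "well_ordered_rat S \<longleftrightarrow> (\<forall>T\<subseteq>S. T \<noteq> {} \<longrightarrow> (\<exists>m\<in>T. \<forall>t\<in>T. m \<le> t))"

definition hsupp :: "(rat \<Rightarrow> 'k::zero) \<Rightarrow> rat set" where
  "hsupp f = {\<gamma>. f \<gamma> \<noteq> 0}"

definition hahn :: "(rat \<Rightarrow> 'k::zero) \<Rightarrow> bool" where
  "hahn f \<longleftrightarrow> well_ordered_rat (hsupp f)"

definition hrestr :: "rat set \<Rightarrow> (rat \<Rightarrow> 'k::zero) \<Rightarrow> rat \<Rightarrow> 'k" where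
  "hrestr Q f = (\<lambda>\<gamma>. if \<gamma> \<in> Q then f \<gamma> else 0)"

text \<open>The operator L = a_n phi_l^n + ... + a_0 acting by
  L(f) = sum_i a_i f(z^(l^i)); coefficient of z^q in a_i(z) f(z^(l^i)) is
  sum_j coeff a_i j * f((q-j)/l^i).\<close>
definition Lop :: "(nat \<Rightarrow> 'k::field poly) \<Rightarrow> nat \<Rightarrow> nat \<Rightarrow> (rat \<Rightarrow> 'k) \<Rightarrow> rat \<Rightarrow> 'k" where
  "Lop a n l f = (\<lambda>q. \<Sum>i\<le>n. \<Sum>j\<le>degree (a i).
      coeff (a i) j * f ((q - of_nat j) / of_nat (l ^ i)))"

definition Sol :: "(nat \<Rightarrow> 'k::field poly) \<Rightarrow> nat \<Rightarrow> nat \<Rightarrow> (rat \<Rightarrow> 'k) set" where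
  "Sol a n l = {f. hahn f \<and> Lop a n l f = (\<lambda>_. 0)}"

text \<open>P(L) = {(l^i, j) : 0 <= i <= n, j in supp a_i}, indexed by the pairs (i,j).\<close>
definition PL :: "(nat \<Rightarrow> 'k::field poly) \<Rightarrow> nat \<Rightarrow> (nat \<times> nat) set" where
  "PL a n = {(i, j). i \<le> n \<and> coeff (a i) j \<noteq> 0}"

definition Psi :: "(nat \<Rightarrow> 'k::field poly) \<Rightarrow> nat \<Rightarrow> nat \<Rightarrow> rat \<Rightarrow> rat set" where
  "Psi a n l v = {v * of_nat (l ^ i) + of_nat j | i j. (i, j) \<in> PL a n}"

definition psi :: "(nat \<Rightarrow> 'k::field poly) \<Rightarrow> nat \<Rightarrow> nat \<Rightarrow> rat \<Rightarrow> rat" where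
  "psi a n l v = Min (Psi a n l v)"

definition pi_op :: "(nat \<Rightarrow> 'k::field poly) \<Rightarrow> nat \<Rightarrow> nat \<Rightarrow> rat \<Rightarrow> rat" where
  "pi_op a n l q = Max {(q - of_nat j) / of_nat (l ^ i) | i j. (i, j) \<in> PL a n}"

definition pval :: "'k::zero poly \<Rightarrow> nat" where
  "pval p = (LEAST j. coeff p j \<noteq> 0)"

definition newton_polygon :: "(nat \<Rightarrow> 'k::field poly) \<Rightarrow> nat \<Rightarrow> nat \<Rightarrow> (real \<times> real) set" where
  "newton_polygon a n l = convex hull
     {(real (l ^ i), y) | i y. i \<le> n \<and> a i \<noteq> 0 \<and> real (pval (a i)) \<le> y}"

definition slopes :: "(nat \<Rightarrow> 'k::field poly) \<Rightarrow> nat \<Rightarrow> nat \<Rightarrow> real set" where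
  "slopes a n l = {s. \<exists>F. F face_of newton_polygon a n l \<and> aff_dim F = 1 \<and>
      (\<exists>p\<in>F. \<exists>q\<in>F. fst p < fst q \<and> s = (snd q - snd p) / (fst q - fst p))}"

definition neg_slopes_in :: "(nat \<Rightarrow> 'k::field poly) \<Rightarrow> nat \<Rightarrow> nat \<Rightarrow> rat set \<Rightarrow> bool" where
  "neg_slopes_in a n l V \<longleftrightarrow> (\<forall>s\<in>slopes a n l. \<exists>v\<in>V. real_of_rat v = - s)"

definition hypH :: "(nat \<Rightarrow> 'k::field poly) \<Rightarrow> nat \<Rightarrow> nat \<Rightarrow> rat set \<Rightarrow> bool" where
  "hypH a n l V \<longleftrightarrow>
     (\<forall>f. hahn f \<and> Lop a n l f = (\<lambda>_. 0) \<longrightarrow> hsupp f \<subseteq> V) \<and>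
     well_ordered_rat V \<and>
     neg_slopes_in a n l V \<and>
     (\<Union>v\<in>V. pi_op a n l ` Psi a n l v) = V"

definition star_prop :: "(nat \<Rightarrow> 'k::field poly) \<Rightarrow> nat \<Rightarrow> nat \<Rightarrow> rat set \<Rightarrow> rat set \<Rightarrow> bool" where
  "star_prop a n l V R \<longleftrightarrow>
     neg_slopes_in a n l R \<and> R \<subseteq> V \<and>
     (\<Union>v\<in>V - R. pi_op a n l ` Psi a n l v) = V - R"

definition CR :: "(nat \<Rightarrow> 'k::field poly) \<Rightarrow> nat \<Rightarrow> nat \<Rightarrow> rat set \<Rightarrow> (rat \<Rightarrow> 'k) set" where
  "CR a n l R = {f. hahn f \<and> hsupp f \<subseteq> R \<and> hsupp (Lop a n l f) \<inter> psi a n l ` R = {}}"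

definition CR' :: "(nat \<Rightarrow> 'k::field poly) \<Rightarrow> nat \<Rightarrow> nat \<Rightarrow> rat set \<Rightarrow> (rat \<Rightarrow> 'k) set" where
  "CR' a n l R = {f. hahn f \<and> hsupp f \<subseteq> R \<and> pi_op a n l ` hsupp (Lop a n l f) \<inter> R = {}}"

end

theory Submission
  imports Defs
begin

text \<open>For \<open>v \<notin> R\<close> the minimum \<open>psi(v)\<close> of \<open>Psi(v)\<close> is attained by a single term of \<open>L\<close>:
two minimising terms would span an edge of the Newton polygon of slope \<open>-v\<close>, whereas
\<open>-S(L) \<subseteq> R\<close>. So the coefficient of \<open>z^psi(v)\<close> in \<open>L(f)\<close> is \<open>c\<^sub>v f\<^sub>v\<close> plus a combination of
coefficients \<open>f\<^sub>w\<close> with \<open>w < v\<close>, and \<open>psi\<close>, \<open>pi\<close> are mutually inverse. A solution vanishing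
on \<open>R\<close> is supported in \<open>V - R\<close>, and at its least exponent \<open>v\<close> the coefficient of \<open>z^psi(v)\<close>
in \<open>L(f)\<close> would be \<open>c\<^sub>v f\<^sub>v \<noteq> 0\<close>: this is injectivity. Conversely an element of \<open>C\<^sub>R\<close> is
extended to \<open>V\<close> by well-founded recursion, choosing \<open>f\<^sub>v\<close> for \<open>v \<in> V - R\<close> so that the
coefficient of \<open>z^psi(v)\<close> in \<open>L(f)\<close> vanishes; the closure properties of \<open>V\<close> and \<open>V - R\<close>
show that no other coefficient of \<open>L(f)\<close> can survive.\<close>

lemma well_ordered_rat_subset: "well_ordered_rat S \<Longrightarrow> T \<subseteq> S \<Longrightarrow> well_ordered_rat T"
  unfolding well_ordered_rat_def by blast

lemma well_ordered_rat_has_least: "well_ordered_rat S \<Longrightarrow> x \<in> S \<Longrightarrow> \<exists>m\<in>S. \<forall>t\<in>S. m \<le> t"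
  unfolding well_ordered_rat_def by blast

lemma pval_le: "coeff p j \<noteq> 0 \<Longrightarrow> pval p \<le> j"
  unfolding pval_def by (rule Least_le)

lemma coeff_pval_nonzero: "p \<noteq> 0 \<Longrightarrow> coeff p (pval p) \<noteq> 0"
  unfolding pval_def by (rule LeastI_ex) (meson leading_coeff_neq_0)

lemma hrestr_linear:
  fixes c :: "'k::semiring_0"
  shows "hrestr R (\<lambda>\<gamma>. c * f \<gamma> + g \<gamma>) = (\<lambda>\<gamma>. c * hrestr R f \<gamma> + hrestr R g \<gamma>)"
  by (simp add: hrestr_def fun_eq_iff)

locale mahler_operator =
  fixes a :: "nat \<Rightarrow> 'k::field poly" and n l :: nat
  assumes l_ge_2: "l \<ge> 2" and a0_nonzero: "a 0 \<noteq> 0"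
begin

text \<open>The monomial \<open>z\<^sup>j \<phi>\<^sub>l\<^sup>i\<close> of \<open>L\<close>, indexed by \<open>(i, j) \<in> PL a n\<close>, maps \<open>z\<^sup>v\<close> to \<open>z\<^bsup>v l\<^sup>i + j\<^esup>\<close>.\<close>

abbreviation term_exp :: "nat \<Rightarrow> nat \<Rightarrow> rat \<Rightarrow> rat" where
  "term_exp i j v \<equiv> v * of_nat (l ^ i) + of_nat j"

abbreviation term_exp_inv :: "nat \<Rightarrow> nat \<Rightarrow> rat \<Rightarrow> rat" where
  "term_exp_inv i j q \<equiv> (q - of_nat j) / of_nat (l ^ i)"

lemma l_power_pos: "(0::rat) < of_nat (l ^ i)"
  using l_ge_2 by simp

lemma term_exp_inv_le_iff: "term_exp_inv i j q \<le> v \<longleftrightarrow> q \<le> term_exp i j v"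
  using l_power_pos[of i] by (simp add: pos_divide_le_eq algebra_simps)

lemma term_exp_inv_less_iff: "term_exp_inv i j q < v \<longleftrightarrow> q < term_exp i j v"
  using l_power_pos[of i] by (simp add: pos_divide_less_eq algebra_simps)

lemma term_exp_inv_eq_iff: "term_exp_inv i j q = v \<longleftrightarrow> q = term_exp i j v"
  using l_power_pos[of i] by (auto simp: field_simps)

lemma finite_PL: "finite (PL a n)"
proof (rule finite_subset)
  show "PL a n \<subseteq> (SIGMA i:{..n}. {..degree (a i)})"
    by (auto simp: PL_def intro: le_degree)
qed auto

lemma pval_a0_in_PL: "(0, pval (a 0)) \<in> PL a n"
  using coeff_pval_nonzero a0_nonzero by (simp add: PL_def)

lemma Psi_eq_image: "Psi a n l v = (\<lambda>(i, j). term_exp i j v) ` PL a n"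
  by (auto simp: Psi_def)

lemma pi_op_eq_Max: "pi_op a n l q = Max ((\<lambda>(i, j). term_exp_inv i j q) ` PL a n)"
  unfolding pi_op_def by (rule arg_cong[where f = Max]) auto

lemma psi_le: "(i, j) \<in> PL a n \<Longrightarrow> psi a n l v \<le> term_exp i j v"
  unfolding psi_def Psi_eq_image using finite_PL by (auto intro: Min_le)

lemma psi_attained: "\<exists>i j. (i, j) \<in> PL a n \<and> psi a n l v = term_exp i j v"
proof -
  have "psi a n l v \<in> (\<lambda>(i, j). term_exp i j v) ` PL a n"
    unfolding psi_def Psi_eq_image using finite_PL pval_a0_in_PL by (intro Min_in) auto
  thus ?thesis by auto
qed

lemma pi_op_ge: "(i, j) \<in> PL a n \<Longrightarrow> term_exp_inv i j q \<le> pi_op a n l q"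
  unfolding pi_op_eq_Max using finite_PL by (auto intro: Max_ge)

lemma pi_op_attained: "\<exists>i j. (i, j) \<in> PL a n \<and> pi_op a n l q = term_exp_inv i j q"
proof -
  have "pi_op a n l q \<in> (\<lambda>(i, j). term_exp_inv i j q) ` PL a n"
    unfolding pi_op_eq_Max using finite_PL pval_a0_in_PL by (intro Max_in) auto
  thus ?thesis by auto
qed

lemma pi_op_psi: "pi_op a n l (psi a n l v) = v"
proof (rule antisym)
  obtain i j where "(i, j) \<in> PL a n" "pi_op a n l (psi a n l v) = term_exp_inv i j (psi a n l v)"
    using pi_op_attained by blast
  thus "pi_op a n l (psi a n l v) \<le> v"
    using psi_le term_exp_inv_le_iff by metis
  obtain i j where "(i, j) \<in> PL a n" "psi a n l v = term_exp i j v"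
    using psi_attained by blast
  thus "v \<le> pi_op a n l (psi a n l v)"
    using pi_op_ge term_exp_inv_eq_iff by metis
qed

lemma psi_pi_op: "psi a n l (pi_op a n l q) = q"
proof (rule antisym)
  obtain i j where "(i, j) \<in> PL a n" "pi_op a n l q = term_exp_inv i j q"
    using pi_op_attained by blast
  thus "psi a n l (pi_op a n l q) \<le> q"
    using psi_le term_exp_inv_eq_iff by metis
  obtain i j where "(i, j) \<in> PL a n" "psi a n l (pi_op a n l q) = term_exp i j (pi_op a n l q)"
    using psi_attained by blast
  thus "q \<le> psi a n l (pi_op a n l q)"
    using pi_op_ge term_exp_inv_le_iff by metis
qed

lemma mem_psi_image_iff: "q \<in> psi a n l ` R \<longleftrightarrow> pi_op a n l q \<in> R"
proof
  assume "pi_op a n l q \<in> R"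
  thus "q \<in> psi a n l ` R" using psi_pi_op[of q] by (metis imageI)
qed (auto simp: pi_op_psi)

lemma disjoint_psi_image_iff: "S \<inter> psi a n l ` R = {} \<longleftrightarrow> pi_op a n l ` S \<inter> R = {}"
  by (auto simp: disjoint_iff mem_psi_image_iff)

lemma CR_eq_CR': "CR a n l R = CR' a n l R"
  unfolding CR_def CR'_def by (simp only: disjoint_psi_image_iff)

lemma Lop_eq_sum_PL:
  "Lop a n l f q = (\<Sum>(i, j)\<in>PL a n. coeff (a i) j * f (term_exp_inv i j q))"
proof -
  have "Lop a n l f q =
      (\<Sum>(i, j)\<in>(SIGMA i:{..n}. {..degree (a i)}). coeff (a i) j * f (term_exp_inv i j q))"
    unfolding Lop_def by (simp add: sum.Sigma)
  also have "\<dots> = (\<Sum>(i, j)\<in>PL a n. coeff (a i) j * f (term_exp_inv i j q))"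
    by (rule sum.mono_neutral_right) (auto simp: PL_def intro: le_degree)
  finally show ?thesis .
qed

lemma hsupp_Lop: "hsupp (Lop a n l f) \<subseteq> (\<Union>w\<in>hsupp f. Psi a n l w)"
proof
  fix q assume "q \<in> hsupp (Lop a n l f)"
  hence "(\<Sum>(i, j)\<in>PL a n. coeff (a i) j * f (term_exp_inv i j q)) \<noteq> 0"
    by (simp add: hsupp_def Lop_eq_sum_PL)
  then obtain i j where ij: "(i, j) \<in> PL a n" "f (term_exp_inv i j q) \<noteq> 0"
    by (auto elim!: sum.not_neutral_contains_not_neutral)
  have "q \<in> Psi a n l (term_exp_inv i j q)"
    unfolding Psi_eq_image using ij(1) term_exp_inv_eq_iff by force
  thus "q \<in> (\<Union>w\<in>hsupp f. Psi a n l w)"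
    using ij(2) by (auto simp: hsupp_def)
qed

lemma Lop_add: "Lop a n l (\<lambda>x. f x + g x) q = Lop a n l f q + Lop a n l g q"
  unfolding Lop_def by (simp add: distrib_left sum.distrib)

lemma Lop_diff: "Lop a n l (\<lambda>x. f x - g x) q = Lop a n l f q - Lop a n l g q"
  unfolding Lop_def by (simp add: right_diff_distrib sum_subtractf)

lemma newton_polygon_above_line:
  "newton_polygon a n l \<subseteq> {x. real_of_rat (psi a n l v) \<le> (real_of_rat v, 1) \<bullet> x}"
  unfolding newton_polygon_def
proof (rule hull_minimal[where S = convex, OF subsetI convex_halfspace_ge])
  fix x assume "x \<in> {(real (l ^ i), y) |i y. i \<le> n \<and> a i \<noteq> 0 \<and> real (pval (a i)) \<le> y}"
  then obtain i y where x: "x = (real (l ^ i), y)" "i \<le> n" "a i \<noteq> 0" "real (pval (a i)) \<le> y"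
    by blast
  hence "(i, pval (a i)) \<in> PL a n"
    using coeff_pval_nonzero by (simp add: PL_def)
  hence "real_of_rat (psi a n l v) \<le> real_of_rat (term_exp i (pval (a i)) v)"
    using psi_le of_rat_less_eq by blast
  thus "x \<in> {x. real_of_rat (psi a n l v) \<le> (real_of_rat v, 1) \<bullet> x}"
    using x by (simp add: inner_Pair of_rat_add of_rat_mult of_rat_power)
qed

text \<open>The line of slope \<open>-v\<close> through \<open>(0, psi(v))\<close> supports the Newton polygon; two terms on
it with distinct \<open>l\<^sup>i\<close> make it meet the polygon in an edge.\<close>

lemma minimal_terms_span_slope:
  assumes ij1: "(i1, j1) \<in> PL a n" and ij2: "(i2, j2) \<in> PL a n" and "i1 < i2"
    and min1: "term_exp i1 j1 v = psi a n l v" and min2: "term_exp i2 j2 v = psi a n l v"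
  shows "- real_of_rat v \<in> slopes a n l"
proof -
  define u where "u = (real_of_rat v, 1 :: real)"
  define c where "c = real_of_rat (psi a n l v)"
  define F where "F = newton_polygon a n l \<inter> {x. u \<bullet> x = c}"
  have face: "F face_of newton_polygon a n l"
    unfolding F_def newton_polygon_def
    by (rule face_of_Int_supporting_hyperplane_ge)
      (use newton_polygon_above_line in \<open>auto simp: u_def c_def newton_polygon_def\<close>)
  have on_line: "(real (l ^ i), real j) \<in> F"
    if "(i, j) \<in> PL a n" "term_exp i j v = psi a n l v" for i j
  proof -
    have "coeff (a i) j \<noteq> 0" "i \<le> n" using that(1) by (auto simp: PL_def)
    hence "(real (l ^ i), real j) \<in> newton_polygon a n l"
      unfolding newton_polygon_def using pval_le by (intro hull_inc) fastforce
    moreover have "real_of_rat (term_exp i j v) = c"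
      using that(2) by (simp add: c_def)
    ultimately show ?thesis
      by (simp add: F_def u_def inner_Pair of_rat_add of_rat_mult of_rat_power)
  qed
  have p1: "(real (l ^ i1), real j1) \<in> F" and p2: "(real (l ^ i2), real j2) \<in> F"
    using on_line ij1 ij2 min1 min2 by auto
  have less: "real (l ^ i1) < real (l ^ i2)"
    using \<open>i1 < i2\<close> l_ge_2 by simp
  have "aff_dim F \<le> aff_dim {x::real \<times> real. u \<bullet> x = c}"
    by (rule aff_dim_subset) (auto simp: F_def)
  also have "\<dots> = 1"
    by (subst aff_dim_hyperplane) (auto simp: u_def zero_prod_def)
  finally have "aff_dim F \<le> 1" .
  moreover have "aff_dim {(real (l ^ i1), real j1), (real (l ^ i2), real j2)} \<le> aff_dim F"
    by (rule aff_dim_subset) (use p1 p2 in auto)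
  ultimately have dim: "aff_dim F = 1"
    using less by auto
  have "real j2 - real j1 = - real_of_rat v * (real (l ^ i2) - real (l ^ i1))"
    using arg_cong[OF min1, of real_of_rat] arg_cong[OF min2, of real_of_rat]
    by (simp add: of_rat_add of_rat_mult of_rat_power algebra_simps)
  hence slope: "- real_of_rat v = (real j2 - real j1) / (real (l ^ i2) - real (l ^ i1))"
    using less by simp
  show ?thesis
    unfolding slopes_def
    by (intro CollectI exI[of _ F] conjI face dim bexI[OF _ p1] bexI[OF _ p2])
      (use less slope in simp_all)
qed

lemma minimal_term_unique:
  assumes "neg_slopes_in a n l R" and "v \<notin> R"
    and "(i1, j1) \<in> PL a n" "term_exp i1 j1 v = psi a n l v"
    and "(i2, j2) \<in> PL a n" "term_exp i2 j2 v = psi a n l v"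
  shows "(i1, j1) = (i2, j2)"
proof -
  have "i1 = i2"
  proof (rule ccontr)
    assume "i1 \<noteq> i2"
    hence "- real_of_rat v \<in> slopes a n l"
      using minimal_terms_span_slope assms(3-6) by (cases "i1 < i2") auto
    then obtain r where "r \<in> R" "real_of_rat r = real_of_rat v"
      using assms(1) unfolding neg_slopes_in_def by fastforce
    thus False using \<open>v \<notin> R\<close> by simp
  qed
  thus ?thesis using assms(4,6) by simp
qed

definition min_term :: "rat \<Rightarrow> nat \<times> nat" where
  "min_term v = (SOME p. p \<in> PL a n \<and> term_exp (fst p) (snd p) v = psi a n l v)"

abbreviation min_coeff :: "rat \<Rightarrow> 'k" where
  "min_coeff v \<equiv> coeff (a (fst (min_term v))) (snd (min_term v))"

definition Lop_tail :: "(rat \<Rightarrow> 'k) \<Rightarrow> rat \<Rightarrow> 'k" where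
  "Lop_tail f v =
    (\<Sum>(i, j)\<in>PL a n - {min_term v}. coeff (a i) j * f (term_exp_inv i j (psi a n l v)))"

lemma min_term_attains_psi:
  "min_term v \<in> PL a n" "term_exp (fst (min_term v)) (snd (min_term v)) v = psi a n l v"
proof -
  have "\<exists>p. p \<in> PL a n \<and> term_exp (fst p) (snd p) v = psi a n l v"
    using psi_attained[of v] by (metis fst_conv snd_conv)
  thus "min_term v \<in> PL a n" "term_exp (fst (min_term v)) (snd (min_term v)) v = psi a n l v"
    unfolding min_term_def by (metis (mono_tags, lifting) someI_ex)+
qed

lemma min_coeff_nonzero: "min_coeff v \<noteq> 0"
  using min_term_attains_psi(1)[of v] by (cases "min_term v") (simp add: PL_def)

lemma Lop_at_psi: "Lop a n l f (psi a n l v) = min_coeff v * f v + Lop_tail f v"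
proof -
  have "term_exp_inv (fst (min_term v)) (snd (min_term v)) (psi a n l v) = v"
    using min_term_attains_psi(2)[of v] term_exp_inv_eq_iff by metis
  thus ?thesis
    unfolding Lop_eq_sum_PL Lop_tail_def
    by (simp add: sum.remove[OF finite_PL min_term_attains_psi(1)[of v]] case_prod_beta)
qed

lemma term_exp_inv_psi_less:
  assumes "neg_slopes_in a n l R" "v \<notin> R" "(i, j) \<in> PL a n - {min_term v}"
  shows "term_exp_inv i j (psi a n l v) < v"
proof -
  obtain i0 j0 where min: "min_term v = (i0, j0)" by fastforce
  have "psi a n l v \<noteq> term_exp i j v"
  proof
    assume "psi a n l v = term_exp i j v"
    hence "(i, j) = (i0, j0)"
      using minimal_term_unique[OF assms(1,2)] min_term_attains_psi[of v] assms(3) min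
      by (metis DiffD1 fst_conv snd_conv)
    thus False using assms(3) min by simp
  qed
  hence "psi a n l v < term_exp i j v"
    using psi_le assms(3) by (simp add: order_less_le)
  thus ?thesis using term_exp_inv_less_iff by blast
qed

lemma Lop_tail_cong:
  assumes "neg_slopes_in a n l R" "v \<notin> R" "\<And>w. w < v \<Longrightarrow> f w = g w"
  shows "Lop_tail f v = Lop_tail g v"
  unfolding Lop_tail_def using term_exp_inv_psi_less[OF assms(1,2)] assms(3)
  by (intro sum.cong) auto

end

locale mahler_star = mahler_operator a n l for a :: "nat \<Rightarrow> 'k::field poly" and n l +
  fixes V R :: "rat set"
  assumes hypH: "hypH a n l V" and star: "star_prop a n l V R"
begin

lemma hsupp_Sol: "f \<in> Sol a n l \<Longrightarrow> hsupp f \<subseteq> V"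
  using conjunct1[OF hypH[unfolded hypH_def]] by (simp add: Sol_def)

lemma well_ordered_V: "well_ordered_rat V"
  using hypH by (simp add: hypH_def)

lemma neg_slopes_R: "neg_slopes_in a n l R"
  using star by (simp add: star_prop_def)

lemma R_subset_V: "R \<subseteq> V"
  using star by (simp add: star_prop_def)

lemma pi_op_Psi_V:
  assumes "w \<in> V" "q \<in> Psi a n l w"
  shows "pi_op a n l q \<in> V"
proof -
  have "pi_op a n l q \<in> (\<Union>v\<in>V. pi_op a n l ` Psi a n l v)"
    using assms by blast
  also have "\<dots> = V"
    using hypH by (simp add: hypH_def)
  finally show ?thesis .
qed

lemma pi_op_Psi_V_minus_R:
  assumes "w \<in> V - R" "q \<in> Psi a n l w"
  shows "pi_op a n l q \<in> V - R"
proof -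
  have "pi_op a n l q \<in> (\<Union>v\<in>V - R. pi_op a n l ` Psi a n l v)"
    using assms by blast
  also have "\<dots> = V - R"
    using star by (simp add: star_prop_def)
  finally show ?thesis .
qed

lemma Lop_at_psi_R_vanishes:
  assumes "hsupp f \<subseteq> V - R" "r \<in> R"
  shows "Lop a n l f (psi a n l r) = 0"
proof (rule ccontr)
  assume "Lop a n l f (psi a n l r) \<noteq> 0"
  hence "psi a n l r \<in> hsupp (Lop a n l f)" by (simp add: hsupp_def)
  then obtain w where "w \<in> hsupp f" "psi a n l r \<in> Psi a n l w"
    using hsupp_Lop by blast
  hence "pi_op a n l (psi a n l r) \<in> V - R"
    using pi_op_Psi_V_minus_R assms(1) by blast
  thus False using pi_op_psi assms(2) by simp
qed

lemma Lop_zero_supported_off_R: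
  assumes supp: "hsupp h \<subseteq> V - R" and sol: "\<And>q. Lop a n l h q = 0"
  shows "h = (\<lambda>_. 0)"
proof (rule ccontr)
  assume "h \<noteq> (\<lambda>_. 0)"
  then obtain x where "x \<in> hsupp h" by (auto simp: hsupp_def)
  moreover have "well_ordered_rat (hsupp h)"
    using well_ordered_rat_subset[OF well_ordered_V] supp by blast
  ultimately obtain v where v: "v \<in> hsupp h" "\<forall>t\<in>hsupp h. v \<le> t"
    using well_ordered_rat_has_least by blast
  have "v \<notin> R" using v(1) supp by blast
  have "Lop_tail h v = Lop_tail (\<lambda>_. 0) v"
    using v(2) by (intro Lop_tail_cong[OF neg_slopes_R \<open>v \<notin> R\<close>]) (force simp: hsupp_def)
  hence "Lop a n l h (psi a n l v) = min_coeff v * h v"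
    by (simp add: Lop_at_psi Lop_tail_def)
  thus False using sol min_coeff_nonzero v(1) by (simp add: hsupp_def)
qed

lemma inj_on_hrestr_Sol: "inj_on (hrestr R) (Sol a n l)"
proof (rule inj_onI)
  fix f g assume f: "f \<in> Sol a n l" and g: "g \<in> Sol a n l" and eq: "hrestr R f = hrestr R g"
  have eq_on_R: "f x = g x" if "x \<in> R" for x
    using fun_cong[OF eq, of x] that by (simp add: hrestr_def)
  have "hsupp (\<lambda>x. f x - g x) \<subseteq> V - R"
  proof
    fix x assume "x \<in> hsupp (\<lambda>x. f x - g x)"
    hence "x \<in> hsupp f \<union> hsupp g" "x \<notin> R"
      using eq_on_R by (auto simp: hsupp_def)
    thus "x \<in> V - R" using hsupp_Sol[OF f] hsupp_Sol[OF g] by blast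
  qed
  moreover have "\<And>q. Lop a n l (\<lambda>x. f x - g x) q = 0"
    using f g by (simp add: Lop_diff Sol_def)
  ultimately have "(\<lambda>x. f x - g x) = (\<lambda>_. 0)"
    by (rule Lop_zero_supported_off_R)
  thus "f = g" by (simp add: fun_eq_iff)
qed

lemma hrestr_Sol_in_CR:
  assumes f: "f \<in> Sol a n l"
  shows "hrestr R f \<in> CR a n l R"
proof -
  have "hsupp (hrestr (- R) f) \<subseteq> V - R"
    using hsupp_Sol[OF f] by (auto simp: hsupp_def hrestr_def)
  moreover have "hrestr R f = (\<lambda>x. f x - hrestr (- R) f x)"
    by (auto simp: hrestr_def)
  ultimately have "Lop a n l (hrestr R f) (psi a n l r) = 0" if "r \<in> R" for r
    using f Lop_at_psi_R_vanishes[OF _ that] by (simp add: Lop_diff Sol_def)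
  moreover have "hsupp (hrestr R f) \<subseteq> R" "hsupp (hrestr R f) \<subseteq> V"
    using hsupp_Sol[OF f] by (auto simp: hsupp_def hrestr_def)
  ultimately show ?thesis
    unfolding CR_def hahn_def using well_ordered_rat_subset[OF well_ordered_V]
    by (auto simp: hsupp_def)
qed

definition less_in_V :: "(rat \<times> rat) set" where
  "less_in_V = {(x, y). x \<in> V \<and> x < y}"

lemma wf_less_in_V: "wf less_in_V"
proof (rule wfI_min)
  fix x :: rat and Q assume "x \<in> Q"
  show "\<exists>z\<in>Q. \<forall>y. (y, z) \<in> less_in_V \<longrightarrow> y \<notin> Q"
  proof (cases "Q \<inter> V = {}")
    case True thus ?thesis using \<open>x \<in> Q\<close> by (auto simp: less_in_V_def)
  next
    case False
    moreover have "well_ordered_rat (Q \<inter> V)"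
      by (rule well_ordered_rat_subset[OF well_ordered_V]) blast
    ultimately obtain m where "m \<in> Q \<inter> V" "\<forall>t\<in>Q \<inter> V. m \<le> t"
      using well_ordered_rat_has_least by blast
    thus ?thesis by (force simp: less_in_V_def)
  qed
qed

text \<open>At \<open>v \<in> V - R\<close> the value is chosen so that \<open>Lop_at_psi\<close> gives coefficient \<open>0\<close> at
\<open>psi(v)\<close>; only the values of \<open>F\<close> on \<open>V \<inter> {..<v}\<close> are consulted.\<close>

definition extension_step :: "(rat \<Rightarrow> 'k) \<Rightarrow> (rat \<Rightarrow> 'k) \<Rightarrow> rat \<Rightarrow> 'k" where
  "extension_step g F v =
    (if v \<in> R then g v
     else if v \<in> V then - Lop_tail (hrestr (V \<inter> {..<v}) F) v / min_coeff v
     else 0)"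

definition extension :: "(rat \<Rightarrow> 'k) \<Rightarrow> rat \<Rightarrow> 'k" where
  "extension g = wfrec less_in_V (extension_step g)"

lemma extension_eq: "extension g v = extension_step g (extension g) v"
proof -
  have cut_eq: "hrestr (V \<inter> {..<v}) (cut F less_in_V v) = hrestr (V \<inter> {..<v}) F" for F
    by (auto simp: hrestr_def cut_apply less_in_V_def)
  have "extension_step g (cut F less_in_V v) v = extension_step g F v" for F
    unfolding extension_step_def cut_eq ..
  thus ?thesis
    unfolding extension_def by (simp add: wfrec[OF wf_less_in_V])
qed

lemma extension_in_R: "v \<in> R \<Longrightarrow> extension g v = g v"
  by (subst extension_eq) (simp add: extension_step_def)

lemma extension_outside_V: "v \<notin> V \<Longrightarrow> extension g v = 0"
  using R_subset_V by (subst extension_eq) (auto simp: extension_step_def)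

lemma extension_in_V_minus_R:
  "v \<in> V - R \<Longrightarrow> extension g v = - Lop_tail (hrestr (V \<inter> {..<v}) (extension g)) v / min_coeff v"
  by (subst extension_eq) (simp add: extension_step_def)

lemma hsupp_extension: "hsupp (extension g) \<subseteq> V"
  using extension_outside_V by (auto simp: hsupp_def)

lemma hrestr_extension: "hsupp g \<subseteq> R \<Longrightarrow> hrestr R (extension g) = g"
  by (auto simp: fun_eq_iff hrestr_def hsupp_def extension_in_R)

lemma Lop_extension_at_psi_V_minus_R:
  assumes "v \<in> V - R"
  shows "Lop a n l (extension g) (psi a n l v) = 0"
proof -
  have "Lop_tail (extension g) v = Lop_tail (hrestr (V \<inter> {..<v}) (extension g)) v"
    using hsupp_extension[of g] assms neg_slopes_R
    by (intro Lop_tail_cong) (auto simp: hrestr_def hsupp_def)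
  thus ?thesis
    using assms min_coeff_nonzero by (simp add: Lop_at_psi extension_in_V_minus_R)
qed

lemma extension_in_Sol:
  assumes g: "g \<in> CR a n l R"
  shows "extension g \<in> Sol a n l"
proof -
  let ?G = "extension g"
  define h where "h = hrestr (- R) ?G"
  have "hsupp g \<subseteq> R" using g by (simp add: CR_def)
  hence split: "?G = (\<lambda>x. g x + h x)"
    by (auto simp: fun_eq_iff h_def hrestr_def hsupp_def extension_in_R)
  have "hsupp h \<subseteq> V - R"
    using hsupp_extension by (auto simp: h_def hsupp_def hrestr_def)
  moreover have "Lop a n l g (psi a n l r) = 0" if "r \<in> R" for r
    using g that unfolding CR_def hsupp_def by blast
  ultimately have at_R: "Lop a n l ?G (psi a n l r) = 0" if "r \<in> R" for r
    using that Lop_at_psi_R_vanishes by (simp only: split Lop_add) simp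
  have "Lop a n l ?G q = 0" for q
  proof (rule ccontr)
    assume "Lop a n l ?G q \<noteq> 0"
    hence "q \<in> hsupp (Lop a n l ?G)" by (simp add: hsupp_def)
    then obtain w where "w \<in> hsupp ?G" "q \<in> Psi a n l w"
      using hsupp_Lop by blast
    hence "pi_op a n l q \<in> V" using pi_op_Psi_V hsupp_extension by blast
    hence "Lop a n l ?G (psi a n l (pi_op a n l q)) = 0"
      using at_R Lop_extension_at_psi_V_minus_R by blast
    thus False using psi_pi_op \<open>Lop a n l ?G q \<noteq> 0\<close> by simp
  qed
  moreover have "hahn ?G"
    unfolding hahn_def using well_ordered_rat_subset[OF well_ordered_V hsupp_extension] .
  ultimately show ?thesis unfolding Sol_def by auto
qed

lemma bij_betw_hrestr_Sol_CR: "bij_betw (hrestr R) (Sol a n l) (CR a n l R)"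
proof -
  have "CR a n l R \<subseteq> hrestr R ` Sol a n l"
  proof
    fix g assume "g \<in> CR a n l R"
    moreover hence "g = hrestr R (extension g)"
      using hrestr_extension by (simp add: CR_def)
    ultimately show "g \<in> hrestr R ` Sol a n l"
      using extension_in_Sol by blast
  qed
  thus ?thesis
    unfolding bij_betw_def using inj_on_hrestr_Sol hrestr_Sol_in_CR by blast
qed

end

theorem mainTheorem17:
  fixes a :: "nat \<Rightarrow> 'k::field poly" and n l :: nat and V R :: "rat set"
  assumes "l \<ge> 2" and "n \<ge> 1" and "a 0 \<noteq> 0" and "a n \<noteq> 0"
    and "hypH a n l V" and "star_prop a n l V R"
  shows "CR a n l R = CR' a n l R
    \<and> bij_betw (hrestr R) (Sol a n l) (CR a n l R)
    \<and> (\<forall>(c::'k) f g. hrestr R (\<lambda>\<gamma>. c * f \<gamma> + g \<gamma>) = (\<lambda>\<gamma>. c * hrestr R f \<gamma> + hrestr R g \<gamma>))"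
proof -
  interpret mahler_star a n l V R
    by unfold_locales (use assms in auto)
  show ?thesis
    using CR_eq_CR' bij_betw_hrestr_Sol_CR hrestr_linear by blast
qed

end
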